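(* Let $f:\mathbb{R}^d\times\mathcal{X}\to\mathbb{R}$ be differentiable in $\theta$, with $\mathcal{X}$ a subset of a Euclidean space and $\sup_{x\in\mathcal{X}}\Vert x\Vert\le D<\infty$, and assume (A1): there are $K_1,K_2>0$ with $\Vert\nabla f(\theta,x)-\nabla f(\hat\theta,\hat x)\Vert\le K_1\Vert\theta-\hat\theta\Vert+K_2\Vert x-\hat x\Vert(\Vert\theta\Vert+\Vert\hat\theta\Vert+1)$ for all $\theta,\hat\theta\in\mathbb{R}^d$, $x,\hat x\in\mathcal{X}$. Let $X_n=(x_1,\dots,x_n)$, $\hat X_n=(\hat x_1,\dots,\hat x_n)\in\mathcal{X}^n$ differ in at most one index, $b\in\{1,\dots,n\}$, $\eta>0$, and let $P,\hat P$ be the transition kernels of the SGD chains $\theta_k=\theta_{k-1}-\frac\eta b\sum_{i\in\Omega_k}\nabla f(\theta_{k-1},x_i)$ and $\hat\theta_k=\hat\theta_{k-1}-\frac\eta b\sum_{i\in\Omega_k}\nabla f(\hat\theta_{k-1},\hat x_i)$, where $(\Omega_k)$ are i.i.d. uniformly random $b$-subsets of $\{1,\dots,n\}$. Let $\hat\theta_*$ be a minimizer of $\hat F(\theta,\hat X_n):=\frac1n\sum_{i=1}^nf(\theta,\hat x_i)$ and $\hat V(\theta)=1+\Vert\theta-\hat\theta_*\Vert^2$. Then $$\sup_{\theta\in\mathbb{R}^d}\frac{\mathcal{W}_1(\delta_\theta P,\delta_\theta\hat P)}{\hat V(\theta)}\le\frac{4DK_2\eta}{n}\left(2\Vert\h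at\theta_*\Vert+1\right).$$
   Context: $\delta_\theta P=P(\theta,\cdot)$; $\mathcal{W}_1$ is the 1-Wasserstein distance. *)

theory Defs
  imports "HOL-Probability.Probability"
begin

definition couplings :: "'a pmf \<Rightarrow> 'a pmf \<Rightarrow> ('a \<times> 'a) pmf set" where
  "couplings p q = {c. map_pmf fst c = p \<and> map_pmf snd c = q}"

definition W1 :: "'a::metric_space pmf \<Rightarrow> 'a pmf \<Rightarrow> real" where
  "W1 p q = (INF c \<in> couplings p q. measure_pmf.expectation c (\<lambda>(u, v). dist u v))"

definition minibatch :: "nat \<Rightarrow> nat \<Rightarrow> nat set pmf" where
  "minibatch n b = pmf_of_set {\<Omega>. \<Omega> \<subseteq> {1..n} \<and> card \<Omega> = b}"

text \<open>One-step transition kernel of minibatch SGD started at theta (i.e. \<delta>_\<theta> P):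
  theta - (eta/b) * sum over the random batch of the gradients at the data points xs i.\<close>
definition sgd_kernel ::
  "('a::euclidean_space \<Rightarrow> 'b \<Rightarrow> 'a) \<Rightarrow> (nat \<Rightarrow> 'b) \<Rightarrow> nat \<Rightarrow> nat \<Rightarrow> real \<Rightarrow> 'a \<Rightarrow> 'a pmf" where
  "sgd_kernel gf xs n b \<eta> \<theta> =
     map_pmf (\<lambda>\<Omega>. \<theta> - (\<eta> / real b) *\<^sub>R (\<Sum>i\<in>\<Omega>. gf \<theta> (xs i))) (minibatch n b)"

end

theory Submission
  imports Defs
begin

text \<open>Both chains are driven by the same minibatch \<open>\<Omega>\<close>. Under this synchronous coupling the two
  updates differ by \<open>\<eta>/b\<close> times the sum over \<open>\<Omega>\<close> of the gradient differences at the common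
  parameter \<open>\<theta>\<close>; only the single index where the data sets differ contributes, it lies in \<open>\<Omega>\<close>
  with probability \<open>b/n\<close>, and by (A1) with \<open>\<theta> = \<theta>'\<close> its contribution is at most
  \<open>2 D K\<^sub>2 (2\<parallel>\<theta>\<parallel> + 1)\<close>. Hence \<open>W\<^sub>1(\<delta>\<^sub>\<theta>P, \<delta>\<^sub>\<theta>P') \<le> 2 D K\<^sub>2 \<eta> (2\<parallel>\<theta>\<parallel> + 1) / n\<close>, and
  \<open>2\<parallel>\<theta>\<parallel> + 1 \<le> 2 (2\<parallel>\<theta>\<^sub>*\<parallel> + 1) (1 + \<parallel>\<theta> - \<theta>\<^sub>*\<parallel>\<^sup>2)\<close> turns this into the weighted bound.\<close>

lemma card_subsets_containing:
  assumes "finite A" "i \<in> A" "1 \<le> b"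
  shows "card {\<Omega>. \<Omega> \<subseteq> A \<and> card \<Omega> = b \<and> i \<in> \<Omega>} = (card A - 1) choose (b - 1)"
proof -
  have "bij_betw (\<lambda>\<Omega>. \<Omega> - {i}) {\<Omega>. \<Omega> \<subseteq> A \<and> card \<Omega> = b \<and> i \<in> \<Omega>}
          {B. B \<subseteq> A - {i} \<and> card B = b - 1}"
  proof (rule bij_betwI[where g = "insert i"])
    show "(\<lambda>\<Omega>. \<Omega> - {i}) \<in> {\<Omega>. \<Omega> \<subseteq> A \<and> card \<Omega> = b \<and> i \<in> \<Omega>} \<rightarrow> {B. B \<subseteq> A - {i} \<and> card B = b - 1}"
      using assms(1) by (auto dest: finite_subset)
    show "insert i \<in> {B. B \<subseteq> A - {i} \<and> card B = b - 1} \<rightarrow> {\<Omega>. \<Omega> \<subseteq> A \<and> card \<Omega> = b \<and> i \<in> \<Omega>}"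
    proof
      fix B assume B: "B \<in> {B. B \<subseteq> A - {i} \<and> card B = b - 1}"
      then have "finite B" "i \<notin> B"
        using assms(1) finite_subset by auto
      then show "insert i B \<in> {\<Omega>. \<Omega> \<subseteq> A \<and> card \<Omega> = b \<and> i \<in> \<Omega>}"
        using B assms by auto
    qed
  qed auto
  then have "card {\<Omega>. \<Omega> \<subseteq> A \<and> card \<Omega> = b \<and> i \<in> \<Omega>} = card {B. B \<subseteq> A - {i} \<and> card B = b - 1}"
    by (rule bij_betw_same_card)
  also have "\<dots> = card (A - {i}) choose (b - 1)"
    using assms(1) by (simp add: n_subsets)
  finally show ?thesis
    using assms(2) by simp
qed

lemma sum_subsets_of_card_sum:
  fixes g :: "'i \<Rightarrow> 'c::comm_semiring_1"
  assumes "finite A" "1 \<le> b"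
  shows "(\<Sum>\<Omega> | \<Omega> \<subseteq> A \<and> card \<Omega> = b. \<Sum>i\<in>\<Omega>. g i) = of_nat ((card A - 1) choose (b - 1)) * (\<Sum>i\<in>A. g i)"
proof -
  let ?S = "{\<Omega>. \<Omega> \<subseteq> A \<and> card \<Omega> = b}"
  have "finite ?S"
    using assms(1) by (auto intro: finite_subset[of _ "Pow A"])
  have "(\<Sum>\<Omega>\<in>?S. \<Sum>i\<in>\<Omega>. g i) = (\<Sum>\<Omega>\<in>?S. \<Sum>i | i \<in> A \<and> i \<in> \<Omega>. g i)"
    by (intro sum.cong) (auto intro!: sum.cong)
  also have "\<dots> = (\<Sum>i\<in>A. \<Sum>\<Omega> | \<Omega> \<in> ?S \<and> i \<in> \<Omega>. g i)"
    by (rule sum.swap_restrict) (use assms(1) \<open>finite ?S\<close> in auto)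
  also have "\<dots> = (\<Sum>i\<in>A. of_nat ((card A - 1) choose (b - 1)) * g i)"
  proof (rule sum.cong)
    fix i assume "i \<in> A"
    have "{\<Omega>. \<Omega> \<in> ?S \<and> i \<in> \<Omega>} = {\<Omega>. \<Omega> \<subseteq> A \<and> card \<Omega> = b \<and> i \<in> \<Omega>}"
      by auto
    then show "(\<Sum>\<Omega> | \<Omega> \<in> ?S \<and> i \<in> \<Omega>. g i) = of_nat ((card A - 1) choose (b - 1)) * g i"
      using card_subsets_containing[OF assms(1) \<open>i \<in> A\<close> assms(2)] by (simp add: mult_of_nat_commute)
  qed simp
  finally show ?thesis
    by (simp add: sum_distrib_left)
qed

lemma expectation_minibatch_sum:
  fixes g :: "nat \<Rightarrow> real"
  assumes "1 \<le> b" "b \<le> n"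
  shows "measure_pmf.expectation (minibatch n b) (\<lambda>\<Omega>. \<Sum>i\<in>\<Omega>. g i) = real b / real n * (\<Sum>i=1..n. g i)"
proof -
  let ?S = "{\<Omega>. \<Omega> \<subseteq> {1..n} \<and> card \<Omega> = b}"
  have "finite ?S"
    by (auto intro: finite_subset[of _ "Pow {1..n}"])
  moreover have "?S \<noteq> {}"
    using obtain_subset_with_card_n[of b "{1..n}"] assms by auto
  ultimately have "measure_pmf.expectation (minibatch n b) (\<lambda>\<Omega>. \<Sum>i\<in>\<Omega>. g i)
      = real ((n - 1) choose (b - 1)) * (\<Sum>i=1..n. g i) / real (n choose b)"
    unfolding minibatch_def
    by (simp add: integral_pmf_of_set sum_subsets_of_card_sum[OF _ assms(1)] n_subsets)
  also have "\<dots> = real b / real n * (\<Sum>i=1..n. g i)"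
  proof -
    have "real b * real (n choose b) = real n * real ((n - 1) choose (b - 1))"
      using times_binomial_minus1_eq[of b n] assms(1) by (simp flip: of_nat_mult)
    moreover have "real (n choose b) > 0" "real n > 0"
      using assms by auto
    ultimately show ?thesis
      by (simp add: field_simps)
  qed
  finally show ?thesis .
qed

lemma W1_le_coupling:
  assumes "c \<in> couplings p q"
  shows "W1 p q \<le> measure_pmf.expectation c (\<lambda>(u, v). dist u v)"
  unfolding W1_def
  by (rule cINF_lower[OF _ assms], rule bdd_belowI[of _ 0]) (auto intro!: integral_nonneg_AE)

lemma W1_map_pmf_le:
  "W1 (map_pmf f M) (map_pmf g M) \<le> measure_pmf.expectation M (\<lambda>\<omega>. dist (f \<omega>) (g \<omega>))"
proof -
  have "map_pmf (\<lambda>\<omega>. (f \<omega>, g \<omega>)) M \<in> couplings (map_pmf f M) (map_pmf g M)"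
    by (simp add: couplings_def pmf.map_comp o_def)
  from W1_le_coupling[OF this] show ?thesis
    by simp
qed

lemma W1_sgd_kernel_le:
  assumes "1 \<le> b" "b \<le> n" "0 \<le> \<eta>"
  shows "W1 (sgd_kernel gf xs n b \<eta> \<theta>) (sgd_kernel gf xs' n b \<eta> \<theta>)
           \<le> \<eta> / real n * (\<Sum>i=1..n. norm (gf \<theta> (xs i) - gf \<theta> (xs' i)))"
proof -
  let ?g = "\<lambda>i. norm (gf \<theta> (xs i) - gf \<theta> (xs' i))"
  have "{\<Omega>. \<Omega> \<subseteq> {1..n} \<and> card \<Omega> = b} \<noteq> {}"
    using obtain_subset_with_card_n[of b "{1..n}"] assms by auto
  then have "finite (set_pmf (minibatch n b))"
    unfolding minibatch_def by (subst set_pmf_of_set) (auto intro: finite_subset[of _ "Pow {1..n}"])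
  then have integrable: "integrable (minibatch n b) h" for h :: "nat set \<Rightarrow> real"
    by (rule integrable_measure_pmf_finite)
  have "W1 (sgd_kernel gf xs n b \<eta> \<theta>) (sgd_kernel gf xs' n b \<eta> \<theta>)
      \<le> measure_pmf.expectation (minibatch n b) (\<lambda>\<Omega>.
           dist (\<theta> - (\<eta> / real b) *\<^sub>R (\<Sum>i\<in>\<Omega>. gf \<theta> (xs i))) (\<theta> - (\<eta> / real b) *\<^sub>R (\<Sum>i\<in>\<Omega>. gf \<theta> (xs' i))))"
    unfolding sgd_kernel_def by (rule W1_map_pmf_le)
  also have "\<dots> = measure_pmf.expectation (minibatch n b)
      (\<lambda>\<Omega>. \<eta> / real b * norm (\<Sum>i\<in>\<Omega>. gf \<theta> (xs i) - gf \<theta> (xs' i)))"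
  proof -
    have "dist (\<theta> - c *\<^sub>R u) (\<theta> - c *\<^sub>R v) = c * norm (u - v)" if "0 \<le> c" for c and u v :: 'a
      using that by (simp add: dist_norm norm_minus_commute flip: scaleR_diff_right)
    then show ?thesis
      using assms(3) by (simp add: sum_subtractf)
  qed
  also have "\<dots> \<le> measure_pmf.expectation (minibatch n b) (\<lambda>\<Omega>. \<eta> / real b * (\<Sum>i\<in>\<Omega>. ?g i))"
    using assms(3) by (intro integral_mono integrable mult_left_mono norm_sum) auto
  also have "\<dots> = \<eta> / real b * (real b / real n * (\<Sum>i=1..n. ?g i))"
    by (simp add: expectation_minibatch_sum[OF assms(1,2)])
  also have "\<dots> = \<eta> / real n * (\<Sum>i=1..n. ?g i)"
    using assms(1) by simp
  finally show ?thesis .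
qed

lemma sum_le_if_card_support_le_one:
  fixes g :: "'i \<Rightarrow> real"
  assumes "finite A" "card {i \<in> A. P i} \<le> 1"
    and "\<And>i. i \<in> A \<Longrightarrow> \<not> P i \<Longrightarrow> g i = 0"
    and "\<And>i. i \<in> A \<Longrightarrow> g i \<le> C" "0 \<le> C"
  shows "sum g A \<le> C"
proof -
  have "sum g A = sum g {i \<in> A. P i}"
    using assms(1,3) by (intro sum.mono_neutral_right) auto
  also have "\<dots> \<le> real (card {i \<in> A. P i}) * C"
    using sum_bounded_above[of "{i \<in> A. P i}" g C] assms(4) by auto
  also have "\<dots> \<le> C"
    using assms(2,5) mult_right_mono[of "real (card {i \<in> A. P i})" 1 C] by simp
  finally show ?thesis .
qed

lemma sum_norm_diff_le_if_differ_at_most_one: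
  fixes h :: "'b::real_normed_vector \<Rightarrow> 'c::real_normed_vector"
  assumes "L-lipschitz_on X h"
    and "\<And>x. x \<in> X \<Longrightarrow> norm x \<le> D" "0 \<le> D"
    and "\<And>i. i \<in> I \<Longrightarrow> xs i \<in> X" "\<And>i. i \<in> I \<Longrightarrow> xs' i \<in> X"
    and "finite I" "card {i \<in> I. xs i \<noteq> xs' i} \<le> 1"
  shows "(\<Sum>i\<in>I. norm (h (xs i) - h (xs' i))) \<le> 2 * D * L"
proof (rule sum_le_if_card_support_le_one[OF assms(6,7)])
  show "norm (h (xs i) - h (xs' i)) \<le> 2 * D * L" if "i \<in> I" for i
  proof -
    have "norm (h (xs i) - h (xs' i)) \<le> L * norm (xs i - xs' i)"
      using lipschitz_onD[OF assms(1) assms(4,5)[OF that]] by (simp add: dist_norm)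
    also have "\<dots> \<le> L * (2 * D)"
      using norm_triangle_ineq4[of "xs i" "xs' i"] assms(2)[OF assms(4)[OF that]] assms(2)[OF assms(5)[OF that]]
        lipschitz_on_nonneg[OF assms(1)]
      by (intro mult_left_mono) auto
    finally show ?thesis
      by (simp add: mult_ac)
  qed
  show "0 \<le> 2 * D * L"
    using assms(3) lipschitz_on_nonneg[OF assms(1)] by simp
qed auto

lemma norm_le_Lyapunov:
  fixes \<theta> \<theta>s :: "'a::real_normed_vector"
  shows "2 * norm \<theta> + 1 \<le> 2 * (2 * norm \<theta>s + 1) * (1 + (norm (\<theta> - \<theta>s))\<^sup>2)"
proof -
  let ?r = "norm (\<theta> - \<theta>s)" and ?c = "2 * norm \<theta>s + 1"
  have "2 * norm \<theta> + 1 \<le> ?c + 2 * ?r"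
    using norm_triangle_ineq[of "\<theta> - \<theta>s" \<theta>s] by simp
  also have "\<dots> \<le> ?c + (1 + ?r\<^sup>2)"
    using sum_squares_bound[of ?r 1] by simp
  also have "\<dots> \<le> ?c * (1 + ?r\<^sup>2) + ?c * (1 + ?r\<^sup>2)"
    using mult_left_mono[of 1 "1 + ?r\<^sup>2" ?c] mult_right_mono[of 1 ?c "1 + ?r\<^sup>2"] by simp
  finally show ?thesis
    unfolding mult.assoc by linarith
qed

theorem lemmaC3:
  fixes f :: "'a::euclidean_space \<Rightarrow> 'b::euclidean_space \<Rightarrow> real"
    and gf :: "'a \<Rightarrow> 'b \<Rightarrow> 'a"
    and X :: "'b set"
    and D K1 K2 \<eta> :: real
    and n b :: nat
    and xs xhs :: "nat \<Rightarrow> 'b"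
    and \<theta>s :: 'a
  assumes grad: "\<And>\<theta> x. x \<in> X \<Longrightarrow> ((\<lambda>t. f t x) has_derivative (\<lambda>h. gf \<theta> x \<bullet> h)) (at \<theta>)"
    and bounded: "\<And>x. x \<in> X \<Longrightarrow> norm x \<le> D"
    and K1: "K1 > 0" and K2: "K2 > 0"
    and A1: "\<And>\<theta> \<theta>' x x'. x \<in> X \<Longrightarrow> x' \<in> X \<Longrightarrow>
               norm (gf \<theta> x - gf \<theta>' x') \<le> K1 * norm (\<theta> - \<theta>') + K2 * norm (x - x') * (norm \<theta> + norm \<theta>' + 1)"
    and xs_in: "\<And>i. i \<in> {1..n} \<Longrightarrow> xs i \<in> X"
    and xhs_in: "\<And>i. i \<in> {1..n} \<Longrightarrow> xhs i \<in> X"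
    and differ: "card {i \<in> {1..n}. xs i \<noteq> xhs i} \<le> 1"
    and b: "1 \<le> b" "b \<le> n"
    and eta: "\<eta> > 0"
    and minimizer: "\<And>\<theta>. (1 / real n) * (\<Sum>i=1..n. f \<theta>s (xhs i)) \<le> (1 / real n) * (\<Sum>i=1..n. f \<theta> (xhs i))"
  shows "\<forall>\<theta>. W1 (sgd_kernel gf xs n b \<eta> \<theta>) (sgd_kernel gf xhs n b \<eta> \<theta>) / (1 + (norm (\<theta> - \<theta>s))\<^sup>2)
           \<le> 4 * D * K2 * \<eta> / real n * (2 * norm \<theta>s + 1)"
proof
  fix \<theta> :: 'a
  have "1 \<in> {1..n}"
    using b by simp
  then have "0 \<le> D"
    using bounded[OF xs_in] norm_ge_zero order_trans by blast
  have "(K2 * (2 * norm \<theta> + 1))-lipschitz_on X (gf \<theta>)"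
    using A1[of _ _ \<theta> \<theta>] K2 by (intro lipschitz_onI) (auto simp: dist_norm mult_ac)
  then have "(\<Sum>i=1..n. norm (gf \<theta> (xs i) - gf \<theta> (xhs i))) \<le> 2 * D * (K2 * (2 * norm \<theta> + 1))"
    using bounded \<open>0 \<le> D\<close> xs_in xhs_in differ by (intro sum_norm_diff_le_if_differ_at_most_one) auto
  then have "W1 (sgd_kernel gf xs n b \<eta> \<theta>) (sgd_kernel gf xhs n b \<eta> \<theta>)
      \<le> \<eta> / real n * (2 * D * (K2 * (2 * norm \<theta> + 1)))"
    using W1_sgd_kernel_le[OF b, of \<eta> gf xs \<theta> xhs] eta
    by (meson order_trans divide_nonneg_nonneg less_imp_le mult_left_mono of_nat_0_le_iff)
  also have "\<dots> \<le> 2 * D * K2 * \<eta> / real n * (2 * (2 * norm \<theta>s + 1) * (1 + (norm (\<theta> - \<theta>s))\<^sup>2))"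
    using mult_left_mono[OF norm_le_Lyapunov, of "2 * D * K2 * \<eta> / real n" \<theta> \<theta>s] \<open>0 \<le> D\<close> K2 eta
    by (simp add: mult_ac)
  also have "\<dots> = 4 * D * K2 * \<eta> / real n * (2 * norm \<theta>s + 1) * (1 + (norm (\<theta> - \<theta>s))\<^sup>2)"
    by (simp add: field_simps)
  finally show "W1 (sgd_kernel gf xs n b \<eta> \<theta>) (sgd_kernel gf xhs n b \<eta> \<theta>) / (1 + (norm (\<theta> - \<theta>s))\<^sup>2)
      \<le> 4 * D * K2 * \<eta> / real n * (2 * norm \<theta>s + 1)"
    by (simp add: divide_le_eq add_pos_nonneg)
qed

end
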